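(* Let $F$ be a positive integer and $S\in\mathrm{Sat}(F)$. Then $S$ has a unique minimal $\mathrm{Sat}(F)$-system of generators, namely $$\{x\in S\setminus\{0\}\mid x<F\text{ and }\mathrm{d}_S(x)\neq\mathrm{d}_S(y)\text{ for all }y\in S\setminus\{0\}\text{ with }y<x\}.$$
   Context: A numerical semigroup is a subset $S\subseteq\mathbb{N}$ closed under addition, containing $0$, with $\mathbb{N}\setminus S$ finite; its Frobenius number $\mathrm{F}(S)$ is the largest integer not in $S$. For $A\subseteq\mathbb{N}$ and $a\in A$, let $\mathrm{d}_A(a)=\gcd\{x\in A\mid x\le a\}$. A numerical semigroup $S$ is saturated if $s+\mathrm{d}_S(s)\in S$ for all $s\in S\setminus\{0\}$. For a positive integer $F$, $\mathrm{Sat}(F)$ denotes the set of all saturated numerical semigroups $S$ with $\mathrm{F}(S)=F$. Let $\Delta(F+1)=\{0\}\cup\{x\in\mathbb{N}\mid x\ge F+1\}$. A set $X\subseteq\mathbb{N}$ is a $\mathrm{Sat}(F)$-set if $X\cap\Delta(F+1)=\emptyset$ and there exists $S\in\mathrm{Sat}(F)$ with $X\subseteq S$. For a $\mathrm{Sat}(F)$-set $X$, $\mathrm{Sat}(F)[X]$ denotes the intersection of all elements of $\mathrm{Sat}(F)$ containing $X$ (the smallest element of $\mathrm{Sat}(F)$ containing $X$). If $S=\mathrm{Sat}(F)[X]$, $X$ is a $\mathrm{Sat}(F)$-system of generators of $S$; it is minimal if $S\neq\mathrm{Sat}(F)[Y]$ for every proper subset $Y\subsetneq X$. *)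

theory Defs
  imports Main
begin

definition numerical_semigroup :: "nat set \<Rightarrow> bool" where
  "numerical_semigroup S \<longleftrightarrow> 0 \<in> S \<and> (\<forall>x\<in>S. \<forall>y\<in>S. x + y \<in> S) \<and> finite (UNIV - S)"

definition frobenius :: "nat set \<Rightarrow> nat" where
  "frobenius S = Max (UNIV - S)"

definition dgcd :: "nat set \<Rightarrow> nat \<Rightarrow> nat" where
  "dgcd A a = Gcd {x \<in> A. x \<le> a}"

definition saturated :: "nat set \<Rightarrow> bool" where
  "saturated S \<longleftrightarrow> numerical_semigroup S \<and> (\<forall>s\<in>S - {0}. s + dgcd S s \<in> S)"

definition Sat :: "nat \<Rightarrow> nat set set" where
  "Sat F = {S. saturated S \<and> UNIV - S \<noteq> {} \<and> frobenius S = F}"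

definition Delta :: "nat \<Rightarrow> nat set" where
  "Delta m = {0} \<union> {x. x \<ge> m}"

definition Sat_set :: "nat \<Rightarrow> nat set \<Rightarrow> bool" where
  "Sat_set F X \<longleftrightarrow> X \<inter> Delta (F + 1) = {} \<and> (\<exists>S\<in>Sat F. X \<subseteq> S)"

definition Sat_closure :: "nat \<Rightarrow> nat set \<Rightarrow> nat set" where
  "Sat_closure F X = \<Inter> {S \<in> Sat F. X \<subseteq> S}"

definition Sat_system :: "nat \<Rightarrow> nat set \<Rightarrow> nat set \<Rightarrow> bool" where
  "Sat_system F X S \<longleftrightarrow> Sat_set F X \<and> S = Sat_closure F X"

definition minimal_Sat_system :: "nat \<Rightarrow> nat set \<Rightarrow> nat set \<Rightarrow> bool" where
  "minimal_Sat_system F X S \<longleftrightarrow> Sat_system F X S \<and>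
     (\<forall>Y. Y \<subset> X \<longrightarrow> S \<noteq> Sat_closure F Y)"

end

theory Submission
  imports Defs
begin

text \<open>Call \<open>x \<in> S - {0}\<close> a jump of \<open>S\<close> if \<open>d\<^sub>S(x)\<close> differs from \<open>d\<^sub>S(y)\<close>
  for every smaller nonzero \<open>y \<in> S\<close>. Every \<open>s \<in> S\<close> is reached from the first jump \<open>g\<close> with
  \<open>d\<^sub>S(g) = d\<^sub>S(s)\<close> by repeatedly adding the current \<open>d\<close>, which any saturated semigroup
  containing the elements below \<open>s\<close> allows; so the jumps below \<open>F\<close> generate \<open>S\<close>.
  Conversely, removing a jump \<open>x\<close> from \<open>S\<close> leaves a saturated semigroup with the same
  Frobenius number: \<open>d\<close> of the predecessor of \<open>x\<close> divides everything below \<open>x\<close> but not \<open>x\<close>,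
  so \<open>x\<close> is neither a sum of smaller elements nor reached by a saturation step.
  Hence every generating set contains all jumps below \<open>F\<close>.\<close>

lemma Gcd_subset_dvd:
  fixes A B :: "'a::semiring_Gcd set"
  shows "A \<subseteq> B \<Longrightarrow> Gcd B dvd Gcd A"
  by (rule Gcd_greatest) (auto intro: Gcd_dvd)

lemma dgcd_dvd: "u \<in> A \<Longrightarrow> u \<le> a \<Longrightarrow> dgcd A a dvd u"
  unfolding dgcd_def by (rule Gcd_dvd) auto

lemma dgcd_pos: "a \<in> A \<Longrightarrow> 0 < a \<Longrightarrow> 0 < dgcd A a"
  using dgcd_dvd[of a A a] by (auto intro: gr0I)

lemma dgcd_antimono: "b \<le> a \<Longrightarrow> dgcd A a dvd dgcd A b"
  unfolding dgcd_def by (rule Gcd_subset_dvd) auto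

lemma dgcd_subset_dvd: "B \<subseteq> A \<Longrightarrow> dgcd A a dvd dgcd B a"
  unfolding dgcd_def by (rule Gcd_subset_dvd) auto

lemma saturated_add_dvd_dgcd:
  assumes "saturated S" and "s \<in> S" and "0 < s" and "dgcd S s dvd n"
  shows "s + n \<in> S"
  using assms(2-)
proof (induction n arbitrary: s rule: less_induct)
  case (less n)
  show ?case
  proof (cases "n = 0")
    case True
    with less show ?thesis by simp
  next
    case False
    define d where "d = dgcd S s"
    have "0 < d" "s + d \<in> S"
      using less assms(1) dgcd_pos unfolding saturated_def d_def by auto
    moreover have "d \<le> n" "d dvd n - d"
      using less False by (simp_all add: d_def dvd_imp_le)
    moreover have "dgcd S (s + d) dvd d"
      unfolding d_def by (rule dgcd_antimono) simp
    ultimately have "s + d + (n - d) \<in> S"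
      using less.IH[of "n - d" "s + d"] by (auto intro: dvd_trans)
    with \<open>d \<le> n\<close> show ?thesis by simp
  qed
qed

lemma Sat_saturated: "S \<in> Sat F \<Longrightarrow> saturated S"
  by (simp add: Sat_def)

lemma Sat_finite_gaps: "S \<in> Sat F \<Longrightarrow> finite (UNIV - S)"
  by (simp add: Sat_def saturated_def numerical_semigroup_def)

lemma Sat_frobenius_notin: "S \<in> Sat F \<Longrightarrow> F \<notin> S"
  using Max_in[OF Sat_finite_gaps] by (auto simp: Sat_def frobenius_def)

lemma Sat_above_frobenius: "S \<in> Sat F \<Longrightarrow> F < y \<Longrightarrow> y \<in> S"
  using Max_ge[OF Sat_finite_gaps, of S F y] by (force simp: Sat_def frobenius_def)

definition dgcd_jumps :: "nat set \<Rightarrow> nat set" where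
  "dgcd_jumps S = {x \<in> S - {0}. \<forall>y\<in>S - {0}. y < x \<longrightarrow> dgcd S x \<noteq> dgcd S y}"

lemma least_dgcd_jump:
  assumes "s \<in> S" and "0 < s"
  obtains g where "g \<in> dgcd_jumps S" "g \<le> s" "dgcd S g = dgcd S s"
proof -
  define P where "P g \<longleftrightarrow> g \<in> S \<and> 0 < g \<and> dgcd S g = dgcd S s" for g
  have "P s" using assms by (simp add: P_def)
  then have "P (Least P)" "Least P \<le> s" by (auto intro: LeastI Least_le)
  moreover have "Least P \<in> dgcd_jumps S"
  proof -
    have "dgcd S (Least P) \<noteq> dgcd S y" if "y \<in> S - {0}" "y < Least P" for y
      using not_less_Least[OF that(2)] that(1) \<open>P (Least P)\<close> by (auto simp: P_def)
    with \<open>P (Least P)\<close> show ?thesis by (auto simp: P_def dgcd_jumps_def)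
  qed
  ultimately show ?thesis using that by (simp add: P_def)
qed

lemma subset_saturated_if_dgcd_jumps_subset:
  assumes T: "saturated T"
    and above: "\<And>s. s \<in> S \<Longrightarrow> m \<le> s \<Longrightarrow> s \<in> T"
    and jumps: "{x \<in> dgcd_jumps S. x < m} \<subseteq> T"
  shows "S \<subseteq> T"
proof -
  have "s \<in> S \<longrightarrow> s \<in> T" for s
  proof (induction s rule: less_induct)
    case (less s)
    show ?case
    proof (intro impI)
      assume sS: "s \<in> S"
      consider "s = 0" | "m \<le> s" | "0 < s" "s < m" by linarith
      then show "s \<in> T"
      proof cases
        case 1
        with T show ?thesis by (simp add: saturated_def numerical_semigroup_def)
      next
        case 2
        with above sS show ?thesis by simp
      next
        case 3
        obtain g where g: "g \<in> dgcd_jumps S" "g \<le> s" "dgcd S g = dgcd S s"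
          using least_dgcd_jump[OF sS \<open>0 < s\<close>] .
        have gS: "g \<in> S" "0 < g" using g(1) by (auto simp: dgcd_jumps_def)
        have gT: "g \<in> T" using g jumps \<open>s < m\<close> by auto
        have "dgcd T g dvd dgcd S g"
          unfolding dgcd_def using less g(2) gT by (intro Gcd_subset_dvd) (auto simp: le_less)
        also have "dgcd S g dvd s - g"
          using g(2,3) dgcd_dvd[OF sS, of s] dgcd_dvd[OF gS(1) g(2)] by (simp add: dvd_diff_nat)
        finally have "g + (s - g) \<in> T"
          using saturated_add_dvd_dgcd[OF T gT gS(2)] by blast
        with g(2) show ?thesis by simp
      qed
    qed
  qed
  then show ?thesis by blast
qed

lemma dgcd_jump_not_dvd:
  assumes x: "x \<in> dgcd_jumps S" and p: "p \<in> S" "0 < p" "p < x"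
    and pred: "\<And>u. u \<in> S \<Longrightarrow> u < x \<Longrightarrow> u \<le> p"
  shows "\<not> dgcd S p dvd x"
proof
  assume dvd_x: "dgcd S p dvd x"
  have "dgcd S p dvd u" if "u \<in> S" "u \<le> x" for u
    using that dvd_x pred dgcd_dvd by (cases "u = x") auto
  then have "dgcd S p dvd dgcd S x"
    unfolding dgcd_def by (auto intro: Gcd_greatest)
  moreover have "dgcd S x dvd dgcd S p"
    using p by (simp add: dgcd_antimono)
  ultimately show False
    using x p unfolding dgcd_jumps_def by (auto dest: dvd_antisym)
qed

lemma dgcd_jump_separating_divisor:
  assumes x: "x \<in> dgcd_jumps S" and s: "s \<in> S" "0 < s" "s < x"
  obtains d where "\<And>u. u \<in> S \<Longrightarrow> u < x \<Longrightarrow> d dvd dgcd S u" and "\<not> d dvd x"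
proof
  define p where "p = Max {u \<in> S. u < x}"
  have "finite {u \<in> S. u < x}" "{u \<in> S. u < x} \<noteq> {}"
    using s by (auto intro: finite_subset[of _ "{..<x}"])
  then have pS: "p \<in> S" "p < x" and pred: "\<And>u. u \<in> S \<Longrightarrow> u < x \<Longrightarrow> u \<le> p"
    unfolding p_def using Max_in[of "{u \<in> S. u < x}"] Max_ge[of "{u \<in> S. u < x}"] by auto
  show "dgcd S p dvd dgcd S u" if "u \<in> S" "u < x" for u
    using that pred by (simp add: dgcd_antimono)
  show "\<not> dgcd S p dvd x"
    using dgcd_jump_not_dvd[OF x pS(1) _ pS(2) pred] pred[OF s(1,3)] s(2) by linarith
qed

lemma saturated_Diff_dgcd_jump:
  assumes S: "saturated S" and x: "x \<in> dgcd_jumps S"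
  shows "saturated (S - {x})"
proof -
  have xS: "x \<in> S" and "0 < x" using x by (auto simp: dgcd_jumps_def)
  have S0: "0 \<in> S" and S_add: "\<And>y z. y \<in> S \<Longrightarrow> z \<in> S \<Longrightarrow> y + z \<in> S"
    and gaps: "finite (UNIV - S)"
    using S by (auto simp: saturated_def numerical_semigroup_def)
  have "y + z \<in> S - {x}" if yz: "y \<in> S - {x}" "z \<in> S - {x}" for y z
  proof -
    have "y + z \<noteq> x"
    proof
      assume sum: "y + z = x"
      then consider "y = 0" | "z = 0" | "0 < y" "y < x" "z < x" by linarith
      then show False
      proof cases
        case 3
        from yz have "y \<in> S" by blast
        then obtain d where d: "\<And>u. u \<in> S \<Longrightarrow> u < x \<Longrightarrow> d dvd dgcd S u" "\<not> d dvd x"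
          using dgcd_jump_separating_divisor[OF x _ 3(1,2)] by blast
        have "d dvd y" "d dvd z"
          using d(1)[of y] d(1)[of z] dgcd_dvd[of y S y] dgcd_dvd[of z S z] yz 3
          by (auto intro: dvd_trans)
        with sum d(2) show False using dvd_add by blast
      qed (use sum yz in auto)
    qed
    with S_add yz show ?thesis by auto
  qed
  moreover have "s + dgcd (S - {x}) s \<in> S - {x}" if s: "s \<in> S - {x} - {0}" for s
  proof -
    have "dgcd S s dvd dgcd (S - {x}) s" by (rule dgcd_subset_dvd) blast
    then have in_S: "s + dgcd (S - {x}) s \<in> S"
      using saturated_add_dvd_dgcd[OF S] s by auto
    have "s + dgcd (S - {x}) s \<noteq> x"
    proof
      assume step: "s + dgcd (S - {x}) s = x"
      then have "s < x" using s dgcd_pos[of s "S - {x}"] by auto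
      have sS: "s \<in> S" "0 < s" using s by auto
      obtain d where d: "d dvd dgcd S s" "\<not> d dvd x"
        using dgcd_jump_separating_divisor[OF x sS \<open>s < x\<close>] sS(1) \<open>s < x\<close> by blast
      have "dgcd (S - {x}) s = dgcd S s"
        unfolding dgcd_def using \<open>s < x\<close> by (metis (lifting) Diff_iff leD singletonD)
      moreover have "d dvd s" using d(1) dgcd_dvd[of s S s] sS by (auto intro: dvd_trans)
      ultimately have "d dvd s + dgcd (S - {x}) s" using d(1) by simp
      with step d(2) show False by simp
    qed
    with in_S show ?thesis by simp
  qed
  moreover have "UNIV - (S - {x}) = insert x (UNIV - S)" using xS by auto
  then have "0 \<in> S - {x}" "finite (UNIV - (S - {x}))"
    using S0 \<open>0 < x\<close> gaps by auto
  ultimately show ?thesis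
    unfolding saturated_def numerical_semigroup_def by blast
qed

lemma Sat_Diff_dgcd_jump:
  assumes S: "S \<in> Sat F" and x: "x \<in> dgcd_jumps S" "x < F"
  shows "S - {x} \<in> Sat F"
proof -
  have gaps: "UNIV - (S - {x}) = insert x (UNIV - S)"
    using x by (auto simp: dgcd_jumps_def)
  have "F \<in> UNIV - S" using Sat_frobenius_notin[OF S] by simp
  then have "Max (insert x (UNIV - S)) = F"
    using S x Sat_finite_gaps[OF S] by (auto simp: Sat_def frobenius_def)
  then show ?thesis
    using saturated_Diff_dgcd_jump[OF Sat_saturated[OF S] x(1)]
    unfolding Sat_def frobenius_def mem_Collect_eq gaps by blast
qed

lemma Sat_closure_subset: "S \<in> Sat F \<Longrightarrow> X \<subseteq> S \<Longrightarrow> Sat_closure F X \<subseteq> S"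
  unfolding Sat_closure_def by blast

lemma Sat_set_subset_Sat_closure: "Sat_set F X \<Longrightarrow> X \<subseteq> Sat_closure F X"
  unfolding Sat_set_def Sat_closure_def by auto

lemma Sat_closure_dgcd_jumps:
  assumes "S \<in> Sat F"
  shows "Sat_closure F {x \<in> dgcd_jumps S. x < F} = S"
proof
  show "Sat_closure F {x \<in> dgcd_jumps S. x < F} \<subseteq> S"
    using assms by (intro Sat_closure_subset) (auto simp: dgcd_jumps_def)
  have "S \<subseteq> T" if "T \<in> Sat F" "{x \<in> dgcd_jumps S. x < F} \<subseteq> T" for T
  proof (rule subset_saturated_if_dgcd_jumps_subset[of T S F])
    fix s assume "s \<in> S" "F \<le> s"
    then show "s \<in> T"
      using that(1) Sat_above_frobenius Sat_frobenius_notin[OF assms] by (cases "s = F") auto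
  qed (use that Sat_saturated in auto)
  then show "S \<subseteq> Sat_closure F {x \<in> dgcd_jumps S. x < F}"
    unfolding Sat_closure_def by blast
qed

lemma dgcd_jumps_subset_if_Sat_closure:
  assumes S: "S \<in> Sat F" and Y: "Y \<subseteq> S" "Sat_closure F Y = S"
  shows "{x \<in> dgcd_jumps S. x < F} \<subseteq> Y"
proof
  fix x assume x: "x \<in> {x \<in> dgcd_jumps S. x < F}"
  show "x \<in> Y"
  proof (rule ccontr)
    assume "x \<notin> Y"
    then have "Sat_closure F Y \<subseteq> S - {x}"
      using Y Sat_Diff_dgcd_jump[OF S] x by (intro Sat_closure_subset) auto
    with Y x show False by (auto simp: dgcd_jumps_def)
  qed
qed

lemma minimal_Sat_system_iff:
  assumes S: "S \<in> Sat F"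
  shows "minimal_Sat_system F X S \<longleftrightarrow> X = {x \<in> dgcd_jumps S. x < F}"
    (is "_ \<longleftrightarrow> X = ?G")
proof
  have GS: "?G \<subseteq> S" by (auto simp: dgcd_jumps_def)
  have contains_G: "?G \<subseteq> Y" if "Y \<subseteq> S" "S = Sat_closure F Y" for Y
    using dgcd_jumps_subset_if_Sat_closure[OF S] that by simp
  {
    assume "minimal_Sat_system F X S"
    then have sys: "Sat_set F X" "S = Sat_closure F X"
      and min: "\<And>Y. Y \<subset> X \<Longrightarrow> S \<noteq> Sat_closure F Y"
      unfolding minimal_Sat_system_def Sat_system_def by blast+
    have "?G \<subseteq> X"
      using contains_G Sat_set_subset_Sat_closure[OF sys(1)] sys(2) by simp
    with min[of ?G] Sat_closure_dgcd_jumps[OF S] show "X = ?G" by blast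
  next
    assume X: "X = ?G"
    have "?G \<inter> Delta (F + 1) = {}" by (auto simp: Delta_def dgcd_jumps_def)
    then have "Sat_set F ?G" using S GS by (auto simp: Sat_set_def)
    moreover have "S \<noteq> Sat_closure F Y" if "Y \<subset> ?G" for Y
      using contains_G[of Y] that GS by blast
    ultimately show "minimal_Sat_system F X S"
      unfolding X minimal_Sat_system_def Sat_system_def
      using Sat_closure_dgcd_jumps[OF S] by simp
  }
qed

theorem proposition41:
  fixes F :: nat and S :: "nat set"
  assumes "F > 0" and "S \<in> Sat F"
  shows "{X. minimal_Sat_system F X S} =
    {{x \<in> S - {0}. x < F \<and> (\<forall>y\<in>S - {0}. y < x \<longrightarrow> dgcd S x \<noteq> dgcd S y)}}"
proof -
  have "{x \<in> S - {0}. x < F \<and> (\<forall>y\<in>S - {0}. y < x \<longrightarrow> dgcd S x \<noteq> dgcd S y)}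
      = {x \<in> dgcd_jumps S. x < F}"
    by (auto simp: dgcd_jumps_def)
  then show ?thesis
    using minimal_Sat_system_iff[OF assms(2)] by auto
qed

end
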